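(* For every $\alpha\in(m,M)$, where $m=\inf_{n\ge1}b_n$ and $M=\sup_{n\ge1}b_n$, the limit $\lim_{x\to+\infty}\frac{D(x,\alpha)}{x}$ does not exist, where $D(x,\alpha)=\#\{n\in\mathbb Z:1\le n\le x,\ b_n\le\alpha\}$. That is, $(b_n)$ has no cumulative distribution function at any point of $(m,M)$.
   Context: Fix integers $p\ge 3$ and $2\le s<p$, and a set $A\subset\{0,1,\dots,p-1\}$ with $\#A=s$. Let $h:\{0,1,\dots,s-1\}\to A$ be the unique strictly increasing bijection. For a positive integer $n$ with base-$s$ expansion $n=\sum_{i=0}^k\varepsilon_i s^i$ ($\varepsilon_i\in\{0,\dots,s-1\}$, $\varepsilon_k\ne 0$), put $a_n=\sum_{i=0}^k h(\varepsilon_i)p^i$. Let $b_n=a_n/n^{\log_s p}$ for $n\ge1$. *)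

theory Defs
  imports "HOL-Analysis.Analysis"
begin

definition hA :: "nat set \<Rightarrow> nat \<Rightarrow> nat" where
  "hA A j = sorted_list_of_set A ! j"

definition digit :: "nat \<Rightarrow> nat \<Rightarrow> nat \<Rightarrow> nat" where
  "digit s n i = (n div s ^ i) mod s"

text \<open>a_n = sum_{i=0}^k h(eps_i) p^i, where k is the index of the leading
  digit, i.e. the digit positions are exactly the i with s^i \<le> n (n \<ge> 1).\<close>
definition aseq :: "nat \<Rightarrow> nat \<Rightarrow> nat set \<Rightarrow> nat \<Rightarrow> nat" where
  "aseq p s A n = (\<Sum>i\<in>{i. s ^ i \<le> n}. hA A (digit s n i) * p ^ i)"

definition bseq :: "nat \<Rightarrow> nat \<Rightarrow> nat set \<Rightarrow> nat \<Rightarrow> real" where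
  "bseq p s A n = real (aseq p s A n) / real n powr (ln (real p) / ln (real s))"

definition Dcount :: "nat \<Rightarrow> nat \<Rightarrow> nat set \<Rightarrow> real \<Rightarrow> real \<Rightarrow> nat" where
  "Dcount p s A x \<alpha> = card {n::nat. 1 \<le> n \<and> real n \<le> x \<and> bseq p s A n \<le> \<alpha>}"

end

theory Submission
  imports Defs
begin

text \<open>Appending k base-s digits to n multiplies a(n) by p^k up to an error below p^k. Hence on
  every block [s^k N, s^k (N + 1)) the values b(e) lie between a(N) / (N + 1)^\<gamma> and
  (a(N) + 1) / N^\<gamma>, with \<gamma> = log_s p, uniformly in k. Taking N = s^m n or N = s^m n - 1
  for large m pushes both bounds towards b(n), so for inf b < \<alpha> < sup b there is a block N0
  on which b \<le> \<alpha> at every scale k and a block N1 on which b > \<alpha> at every scale.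
  If D(x, \<alpha>) / x converged to L, comparing D at s^k N - 1 and s^k (N + 1) - 1 would force
  L to equal the proportion of the block counted by D, i.e. 1 for N0 and 0 for N1.\<close>

lemma hA_in:
  assumes "finite A" "j < card A" shows "hA A j \<in> A"
  using assms unfolding hA_def by (metis nth_mem length_sorted_list_of_set set_sorted_list_of_set)

lemma hA_strict_mono:
  assumes "finite A" "i < j" "j < card A" shows "hA A i < hA A j"
  unfolding hA_def using sorted_wrt_nth_less[OF strict_sorted_list_of_set[of A]] assms by simp

lemma finite_digit_positions:
  fixes s n :: nat
  assumes "2 \<le> s" shows "finite {i. s ^ i \<le> n}"
proof (rule finite_subset[of _ "{..n}"])
  have "i < s ^ i" for i using assms
    by (metis less_exp order_less_le_trans power_mono zero_le_numeral)
  then show "{i. s ^ i \<le> n} \<subseteq> {..n}" by (auto intro: less_imp_le order_less_le_trans)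
qed simp

lemma aseq_0 [simp]: "2 \<le> s \<Longrightarrow> aseq p s A 0 = 0"
  unfolding aseq_def by simp

lemma digit_positions_step:
  fixes s q j :: nat
  assumes s: "2 \<le> s" and j: "j < s" and pos: "0 < s * q + j"
  shows "{i. s ^ i \<le> s * q + j} = insert 0 (Suc ` {i. s ^ i \<le> q})"
proof -
  have key: "s * s ^ k \<le> s * q + j \<longleftrightarrow> s ^ k \<le> q" for k
  proof
    assume "s * s ^ k \<le> s * q + j"
    then have "(s * s ^ k) div s \<le> (s * q + j) div s" by (rule div_le_mono)
    then show "s ^ k \<le> q" using s j by simp
  qed (use s in \<open>simp add: add_increasing2\<close>)
  show ?thesis
  proof (rule set_eqI)
    fix i
    show "i \<in> {i. s ^ i \<le> s * q + j} \<longleftrightarrow> i \<in> insert 0 (Suc ` {i. s ^ i \<le> q})"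
      using pos key by (cases i) (auto simp: Suc_le_eq)
  qed
qed

lemma aseq_base_step:
  assumes s: "2 \<le> s" and j: "j < s" and pos: "0 < s * q + j"
  shows "aseq p s A (s * q + j) = p * aseq p s A q + hA A j"
proof -
  have "digit s (s * q + j) (Suc i) = digit s q i" for i
  proof -
    have "(s * q + j) div s ^ Suc i = ((s * q + j) div s) div s ^ i"
      by (simp add: div_mult2_eq mult.commute)
    also have "(s * q + j) div s = q" using j by simp
    finally show ?thesis unfolding digit_def by simp
  qed
  moreover have "digit s (s * q + j) 0 = j" unfolding digit_def using j by simp
  ultimately have "aseq p s A (s * q + j)
      = hA A j + (\<Sum>i\<in>{i. s ^ i \<le> q}. hA A (digit s q i) * p ^ Suc i)"
    unfolding aseq_def digit_positions_step[OF s j pos]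
    using finite_digit_positions[OF s] by (simp add: sum.reindex)
  then show ?thesis
    unfolding aseq_def by (simp add: sum_distrib_left mult.assoc mult.left_commute)
qed

lemma aseq_base_step_le:
  assumes "2 \<le> s" and "j < s"
  shows "aseq p s A (s * q + j) \<le> p * aseq p s A q + hA A j"
  using assms aseq_base_step[OF assms] by (cases "s * q + j = 0") auto

lemma limit_ratio_from_increments:
  fixes F :: "real \<Rightarrow> real" and u v w :: "nat \<Rightarrow> real"
  assumes lim: "((\<lambda>x. F x / x) \<longlongrightarrow> L) at_top"
    and u: "filterlim u at_top sequentially" and v: "filterlim v at_top sequentially"
    and ux: "(\<lambda>k. u k / w k) \<longlonglongrightarrow> x" and vy: "(\<lambda>k. v k / w k) \<longlonglongrightarrow> y"
    and incr: "\<And>k. F (v k) - F (u k) = c * w k" and w: "\<And>k. w k \<noteq> 0"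
  shows "c = L * (y - x)"
proof -
  let ?g = "\<lambda>k. F (v k) / v k * (v k / w k) - F (u k) / u k * (u k / w k)"
  have "?g \<longlonglongrightarrow> L * y - L * x"
    by (intro tendsto_intros filterlim_compose[OF lim] u v ux vy)
  moreover have "eventually (\<lambda>k. ?g k = c) sequentially"
    using filterlim_at_top_dense[THEN iffD1, OF u, rule_format, of 0]
      filterlim_at_top_dense[THEN iffD1, OF v, rule_format, of 0]
  proof eventually_elim
    case (elim k)
    then show ?case using incr[of k] w[of k] by (simp add: field_simps)
  qed
  ultimately have "(\<lambda>k. c) \<longlonglongrightarrow> L * y - L * x"
    by (rule Lim_transform_eventually)
  then show ?thesis by (simp add: LIMSEQ_const_iff right_diff_distrib)
qed

locale digit_substitution =
  fixes p s :: nat and A :: "nat set"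
  assumes base_ge_2: "2 \<le> s"
    and digits_less: "A \<subseteq> {0..<p}"
    and card_digits: "card A = s"
begin

abbreviation a :: "nat \<Rightarrow> nat" where "a \<equiv> aseq p s A"

abbreviation h :: "nat \<Rightarrow> nat" where "h \<equiv> hA A"

lemma finite_digits: "finite A"
  using digits_less finite_subset by blast

lemma base_le_p: "s \<le> p"
  using card_mono[OF _ digits_less] card_digits by simp

lemma h_less: "j < s \<Longrightarrow> h j < p"
  using hA_in[OF finite_digits] digits_less card_digits by fastforce

lemma h_strict_mono: "i < j \<Longrightarrow> j < s \<Longrightarrow> h i < h j"
  using hA_strict_mono[OF finite_digits] card_digits by simp

lemma a_block_upper: "r < s ^ k \<Longrightarrow> a (s ^ k * N + r) < p ^ k * (a N + 1)"
proof (induction k arbitrary: r)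
  case (Suc k)
  have "s ^ Suc k * N + r = s * (s ^ k * N + r div s) + r mod s"
    by (simp add: algebra_simps)
  moreover have "r div s < s ^ k"
    using Suc.prems base_ge_2 by (simp add: div_less_iff_less_mult mult.commute)
  moreover have "r mod s < s" using base_ge_2 by simp
  ultimately have "a (s ^ Suc k * N + r) \<le> p * a (s ^ k * N + r div s) + h (r mod s)"
    using aseq_base_step_le[OF base_ge_2] by metis
  also have "\<dots> < p * (a (s ^ k * N + r div s) + 1)"
    using h_less[OF \<open>r mod s < s\<close>] by simp
  also have "\<dots> \<le> p * (p ^ k * (a N + 1))"
    using Suc.IH[OF \<open>r div s < s ^ k\<close>] by (intro mult_le_mono2) simp
  finally show ?case by (simp add: algebra_simps)
qed simp

lemma a_block_lower: "1 \<le> N \<Longrightarrow> r < s ^ k \<Longrightarrow> p ^ k * a N \<le> a (s ^ k * N + r)"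
proof (induction k arbitrary: r)
  case (Suc k)
  have "s ^ Suc k * N + r = s * (s ^ k * N + r div s) + r mod s"
    by (simp add: algebra_simps)
  moreover have "r div s < s ^ k"
    using Suc.prems base_ge_2 by (simp add: div_less_iff_less_mult mult.commute)
  moreover have "0 < s * (s ^ k * N + r div s) + r mod s"
    using Suc.prems base_ge_2 by simp
  moreover have "r mod s < s" using base_ge_2 by simp
  ultimately have "p * a (s ^ k * N + r div s) \<le> a (s ^ Suc k * N + r)"
    using aseq_base_step[OF base_ge_2] by (metis le_add1)
  moreover have "p ^ k * a N \<le> a (s ^ k * N + r div s)"
    using Suc.IH[OF Suc.prems(1) \<open>r div s < s ^ k\<close>] .
  ultimately show ?case
    by (metis mult_le_mono2 order_trans power_Suc mult.assoc)
qed simp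

lemma a_strict_mono: "strict_mono a"
  unfolding strict_mono_Suc_iff
proof
  fix n
  show "a n < a (Suc n)"
  proof (induction n rule: less_induct)
    case (less n)
    define q j where "q = n div s" and "j = n mod s"
    have n: "n = s * q + j" and j: "j < s"
      unfolding q_def j_def using base_ge_2 by simp_all
    show ?case
    proof (cases "Suc j < s")
      case True
      have "a n \<le> p * a q + h j" using aseq_base_step_le[OF base_ge_2 j] n by simp
      also have "\<dots> < p * a q + h (Suc j)" using h_strict_mono True by simp
      also have "\<dots> = a (Suc n)" using aseq_base_step[OF base_ge_2 True, of q] n by simp
      finally show ?thesis .
    next
      case False
      then have Suc_n: "Suc n = s * Suc q + 0" using n j by simp
      have "q < n" using n False base_ge_2 unfolding q_def by simp
      have "a n \<le> p * a q + h j" using aseq_base_step_le[OF base_ge_2 j] n by simp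
      also have "\<dots> < p * (a q + 1)" using h_less[OF j] by simp
      also have "\<dots> \<le> p * a (Suc q)"
        using less.IH[OF \<open>q < n\<close>] by (intro mult_le_mono2) simp
      also have "\<dots> \<le> a (Suc n)"
        using aseq_base_step[OF base_ge_2 _ , of 0 "Suc q" p A] base_ge_2 Suc_n by simp
      finally show ?thesis .
    qed
  qed
qed

abbreviation \<gamma> :: real where "\<gamma> \<equiv> ln (real p) / ln (real s)"

abbreviation b :: "nat \<Rightarrow> real" where "b \<equiv> bseq p s A"

lemma gamma_nonneg: "0 \<le> \<gamma>"
  using base_ge_2 base_le_p by simp

lemma powr_gamma_scale:
  assumes "0 \<le> x" shows "(real s ^ k * x) powr \<gamma> = real p ^ k * x powr \<gamma>"
proof -
  have s: "0 < real s" "ln (real s) \<noteq> 0" and p: "0 < real p"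
    using base_ge_2 base_le_p by auto
  have "real s powr \<gamma> = real p"
    using s p by (simp add: powr_def)
  then have "(real s ^ k) powr \<gamma> = real p ^ k"
    using s powr_power[of "real s" \<gamma> k] by (simp add: powr_realpow[symmetric] powr_powr)
  then show ?thesis using assms s by (simp add: powr_mult)
qed

lemma b_block_upper:
  assumes N: "1 \<le> N" and r: "r < s ^ k"
  shows "b (s ^ k * N + r) \<le> (real (a N) + 1) / real N powr \<gamma>"
proof -
  define e where "e = s ^ k * N + r"
  have "a e < p ^ k * (a N + 1)" unfolding e_def by (rule a_block_upper[OF r])
  then have "real (a e) \<le> real (p ^ k * (a N + 1))" by linarith
  then have num: "real (a e) \<le> real p ^ k * (real (a N) + 1)" by (simp add: algebra_simps)
  have "(real s ^ k * real N) powr \<gamma> \<le> real e powr \<gamma>"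
    by (rule powr_mono2[OF gamma_nonneg]) (simp_all add: e_def)
  then have den: "real p ^ k * real N powr \<gamma> \<le> real e powr \<gamma>"
    by (simp add: powr_gamma_scale)
  have "0 < real p ^ k * real N powr \<gamma>" using N base_ge_2 base_le_p by simp
  then have "b e \<le> real p ^ k * (real (a N) + 1) / (real p ^ k * real N powr \<gamma>)"
    unfolding bseq_def using num den by (intro frac_le) auto
  then show ?thesis using base_ge_2 base_le_p by (simp add: e_def)
qed

lemma b_block_lower:
  assumes N: "1 \<le> N" and r: "r < s ^ k"
  shows "real (a N) / (real N + 1) powr \<gamma> \<le> b (s ^ k * N + r)"
proof -
  define e where "e = s ^ k * N + r"
  have "p ^ k * a N \<le> a e" unfolding e_def by (rule a_block_lower[OF N r])
  then have "real (p ^ k * a N) \<le> real (a e)" by linarith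
  then have num: "real p ^ k * real (a N) \<le> real (a e)" by simp
  have "e \<le> s ^ k * (N + 1)" unfolding e_def using r by simp
  then have "real e \<le> real (s ^ k * (N + 1))" by linarith
  then have "real e powr \<gamma> \<le> (real s ^ k * (real N + 1)) powr \<gamma>"
    by (intro powr_mono2[OF gamma_nonneg]) (simp_all add: algebra_simps)
  then have den: "real e powr \<gamma> \<le> real p ^ k * (real N + 1) powr \<gamma>"
    by (simp add: powr_gamma_scale)
  have "0 < e" using N base_ge_2 by (simp add: e_def)
  then have "real p ^ k * real (a N) / (real p ^ k * (real N + 1) powr \<gamma>) \<le> b e"
    unfolding bseq_def using num den by (intro frac_le) auto
  then show ?thesis using base_ge_2 base_le_p by (simp add: e_def)
qed

lemma tendsto_b_perturbed:
  assumes "t \<longlonglongrightarrow> 0" and "1 \<le> n"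
  shows "(\<lambda>m. real (a n) / (real n + t m) powr \<gamma>) \<longlonglongrightarrow> b n"
proof -
  have "(\<lambda>m. real (a n) / (real n + t m) powr \<gamma>) \<longlonglongrightarrow> real (a n) / (real n + 0) powr \<gamma>"
    using assms by (intro tendsto_intros) auto
  then show ?thesis by (simp add: bseq_def)
qed

lemma exists_block_above:
  assumes n: "1 \<le> n" and above: "\<alpha> < b n"
  shows "\<exists>N\<ge>1. \<alpha> < real (a N) / (real N + 1) powr \<gamma>"
proof -
  have "(\<lambda>m. inverse (real s ^ m)) \<longlonglongrightarrow> 0"
    using base_ge_2 by (intro LIMSEQ_inverse_realpow_zero) simp
  from order_tendstoD(1)[OF tendsto_b_perturbed[OF this n] above]
  obtain m where m: "\<alpha> < real (a n) / (real n + inverse (real s ^ m)) powr \<gamma>"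
    by (auto simp: eventually_sequentially)
  define N where "N = s ^ m * n"
  have N: "1 \<le> N" using n base_ge_2 by (simp add: N_def)
  have "p ^ m * a n \<le> a N" using a_block_lower[OF n, of 0 m] base_ge_2 by (simp add: N_def)
  then have "real (p ^ m * a n) \<le> real (a N)" by linarith
  then have num: "real p ^ m * real (a n) \<le> real (a N)" by simp
  have "real N + 1 = real s ^ m * (real n + inverse (real s ^ m))"
    using base_ge_2 by (simp add: N_def field_simps)
  then have den: "(real N + 1) powr \<gamma> = real p ^ m * (real n + inverse (real s ^ m)) powr \<gamma>"
    by (simp add: powr_gamma_scale)
  have "real (a n) / (real n + inverse (real s ^ m)) powr \<gamma>
      = real p ^ m * real (a n) / (real p ^ m * (real n + inverse (real s ^ m)) powr \<gamma>)"
    using base_ge_2 base_le_p by simp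
  also have "\<dots> \<le> real (a N) / (real N + 1) powr \<gamma>"
  proof (rule frac_le[OF _ num])
    show "0 < (real N + 1) powr \<gamma>" by simp
  qed (simp_all add: den)
  finally show ?thesis using m N by (intro exI[of _ N]) auto
qed

lemma exists_block_below:
  assumes n: "1 \<le> n" and below: "b n < \<alpha>"
  shows "\<exists>N\<ge>1. (real (a N) + 1) / real N powr \<gamma> < \<alpha>"
proof -
  have "(\<lambda>m. - inverse (real s ^ m)) \<longlonglongrightarrow> 0"
    using tendsto_minus[OF LIMSEQ_inverse_realpow_zero[of "real s"]] base_ge_2 by simp
  from eventually_conj[OF order_tendstoD(2)[OF tendsto_b_perturbed[OF this n] below]
      eventually_ge_at_top[of 1]]
  obtain m where m: "real (a n) / (real n - inverse (real s ^ m)) powr \<gamma> < \<alpha>" and "1 \<le> m"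
    by (auto simp: eventually_sequentially)
  then have "s \<le> s ^ m" using base_ge_2 by (simp add: self_le_power)
  then have sm: "2 \<le> s ^ m" using base_ge_2 by linarith
  define N where "N = s ^ m * n - 1"
  \<comment> \<open>N is the last element of the block of n - 1 at scale m, which gives a(N) + 1 \<le> p^m a(n).\<close>
  have "s ^ m \<le> s ^ m * n" using n by simp
  then have N: "1 \<le> N" unfolding N_def using sm by linarith
  have "N = s ^ m * (n - 1) + (s ^ m - 1)"
    using n sm by (simp add: N_def diff_mult_distrib2)
  moreover have "s ^ m - 1 < s ^ m" using sm by simp
  ultimately have "a N < p ^ m * (a (n - 1) + 1)"
    by (simp only: a_block_upper)
  also have "\<dots> \<le> p ^ m * a n"
    using strict_monoD[OF a_strict_mono, of "n - 1" n] n by (intro mult_le_mono2) simp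
  finally have "real (a N) + 1 \<le> real (p ^ m * a n)" by linarith
  then have num: "real (a N) + 1 \<le> real p ^ m * real (a n)" by simp
  have "real 2 \<le> real (s ^ m)" using sm by (simp only: of_nat_le_iff)
  then have "inverse (real s ^ m) \<le> inverse 2" by (intro le_imp_inverse_le) auto
  then have pos: "0 < real n - inverse (real s ^ m)" using n by simp
  have "real N = real (s ^ m * n) - real 1"
    unfolding N_def using sm \<open>s ^ m \<le> s ^ m * n\<close> by (intro of_nat_diff) linarith
  then have "real N = real s ^ m * (real n - inverse (real s ^ m))"
    using base_ge_2 by (simp add: right_diff_distrib)
  then have den: "real N powr \<gamma> = real p ^ m * (real n - inverse (real s ^ m)) powr \<gamma>"
    using pos by (simp add: powr_gamma_scale)
  have "(real (a N) + 1) / real N powr \<gamma>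
      \<le> real p ^ m * real (a n) / (real p ^ m * (real n - inverse (real s ^ m)) powr \<gamma>)"
  proof (rule frac_le[OF _ num])
    show "0 < real p ^ m * (real n - inverse (real s ^ m)) powr \<gamma>"
      using pos base_ge_2 base_le_p by simp
  qed (simp_all add: den)
  also have "\<dots> = real (a n) / (real n - inverse (real s ^ m)) powr \<gamma>"
    using base_ge_2 base_le_p by simp
  finally show ?thesis using m N by (intro exI[of _ N]) auto
qed

lemma Dcount_eq_sum:
  "real (Dcount p s A (real m - 1) \<alpha>) = (\<Sum>n\<in>{1..<m}. of_bool (b n \<le> \<alpha>))"
proof -
  have "{n. 1 \<le> n \<and> real n \<le> real m - 1 \<and> b n \<le> \<alpha>} = {1..<m} \<inter> {n. b n \<le> \<alpha>}"
    by auto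
  then show ?thesis unfolding Dcount_def by simp
qed

lemma Dcount_block_increment:
  assumes "1 \<le> N"
  shows "real (Dcount p s A (real (s ^ k * (N + 1)) - 1) \<alpha>)
      - real (Dcount p s A (real (s ^ k * N) - 1) \<alpha>)
    = (\<Sum>r<s ^ k. of_bool (b (s ^ k * N + r) \<le> \<alpha>))"
proof -
  have "1 \<le> s ^ k * N" using assms base_ge_2 by simp
  then have "(\<Sum>n\<in>{1..<s ^ k * (N + 1)}. of_bool (b n \<le> \<alpha>)) =
      (\<Sum>n\<in>{1..<s ^ k * N}. of_bool (b n \<le> \<alpha>))
      + (\<Sum>n\<in>{s ^ k * N..<s ^ k + s ^ k * N}. of_bool (b n \<le> \<alpha>))"
    by (simp add: sum.atLeastLessThan_concat algebra_simps)
  also have "(\<Sum>n\<in>{s ^ k * N..<s ^ k + s ^ k * N}. g n) = (\<Sum>r<s ^ k. g (s ^ k * N + r))"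
    for g :: "nat \<Rightarrow> real"
    using sum.shift_bounds_nat_ivl[of g 0 "s ^ k * N" "s ^ k"]
    by (simp add: atLeast0LessThan add.commute)
  finally show ?thesis unfolding Dcount_eq_sum by linarith
qed

lemma filterlim_block_start_at_top:
  "1 \<le> N \<Longrightarrow> filterlim (\<lambda>k. real (s ^ k * N) - 1) at_top sequentially"
proof (rule filterlim_at_top_mono[OF filterlim_real_sequentially], rule always_eventually, rule allI)
  fix k assume "1 \<le> N"
  have "k < 2 ^ k" by (rule less_exp)
  also have "\<dots> \<le> s ^ k" using base_ge_2 by (rule power_mono) simp
  also have "\<dots> \<le> s ^ k * N" using \<open>1 \<le> N\<close> by simp
  finally show "real k \<le> real (s ^ k * N) - 1" by linarith
qed

lemma Dcount_limit_eq_block_density: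
  assumes lim: "((\<lambda>x. real (Dcount p s A x \<alpha>) / x) \<longlongrightarrow> L) at_top" and N: "1 \<le> N"
    and block: "\<And>k r. r < s ^ k \<Longrightarrow> of_bool (b (s ^ k * N + r) \<le> \<alpha>) = c"
  shows "L = c"
proof -
  have ratio: "(\<lambda>k. (real (s ^ k * M) - 1) / real s ^ k) \<longlonglongrightarrow> real M" for M
  proof -
    have "(\<lambda>k. real M - inverse (real s ^ k)) \<longlonglongrightarrow> real M - 0"
      using base_ge_2 by (intro tendsto_intros LIMSEQ_inverse_realpow_zero) simp
    moreover have "(real (s ^ k * M) - 1) / real s ^ k = real M - inverse (real s ^ k)" for k
      using base_ge_2 by (simp add: field_simps)
    ultimately show ?thesis by simp
  qed
  have "c = L * (real (N + 1) - real N)"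
  proof (rule limit_ratio_from_increments[OF lim _ _ ratio ratio])
    show "filterlim (\<lambda>k. real (s ^ k * N) - 1) at_top sequentially"
      by (rule filterlim_block_start_at_top[OF N])
    show "filterlim (\<lambda>k. real (s ^ k * (N + 1)) - 1) at_top sequentially"
      by (rule filterlim_block_start_at_top) simp
    show "real (Dcount p s A (real (s ^ k * (N + 1)) - 1) \<alpha>)
        - real (Dcount p s A (real (s ^ k * N) - 1) \<alpha>) = c * real s ^ k" for k
      unfolding Dcount_block_increment[OF N] using block by simp
    show "real s ^ k \<noteq> 0" for k using base_ge_2 by simp
  qed
  then show ?thesis by simp
qed

end

theorem theorem3:
  fixes p s :: nat and A :: "nat set" and \<alpha> :: real
  assumes "p \<ge> 3" and "2 \<le> s" and "s < p"
    and "A \<subseteq> {0..<p}" and "card A = s"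
    and "(INF n\<in>{1..}. bseq p s A n) < \<alpha>"
    and "\<alpha> < (SUP n\<in>{1..}. bseq p s A n)"
  shows "\<not> (\<exists>L. ((\<lambda>x. real (Dcount p s A x \<alpha>) / x) \<longlongrightarrow> L) at_top)"
proof
  interpret digit_substitution p s A
    using assms by unfold_locales auto
  assume "\<exists>L. ((\<lambda>x. real (Dcount p s A x \<alpha>) / x) \<longlongrightarrow> L) at_top"
  then obtain L where lim: "((\<lambda>x. real (Dcount p s A x \<alpha>) / x) \<longlongrightarrow> L) at_top" ..
  obtain n0 where "1 \<le> n0" "b n0 < \<alpha>" using cInf_lessD[OF _ assms(6)] by auto
  then obtain N0 where N0: "1 \<le> N0" "(real (a N0) + 1) / real N0 powr \<gamma> < \<alpha>"
    using exists_block_below by blast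
  obtain n1 where "1 \<le> n1" "\<alpha> < b n1" using less_cSupD[OF _ assms(7)] by auto
  then obtain N1 where N1: "1 \<le> N1" "\<alpha> < real (a N1) / (real N1 + 1) powr \<gamma>"
    using exists_block_above by blast
  have "L = 1"
  proof (rule Dcount_limit_eq_block_density[OF lim N0(1)])
    fix k r :: nat assume "r < s ^ k"
    from b_block_upper[OF N0(1) this] N0(2) have "b (s ^ k * N0 + r) \<le> \<alpha>" by linarith
    then show "of_bool (b (s ^ k * N0 + r) \<le> \<alpha>) = 1" by simp
  qed
  moreover have "L = 0"
  proof (rule Dcount_limit_eq_block_density[OF lim N1(1)])
    fix k r :: nat assume "r < s ^ k"
    from b_block_lower[OF N1(1) this] N1(2) have "\<alpha> < b (s ^ k * N1 + r)" by linarith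
    then show "of_bool (b (s ^ k * N1 + r) \<le> \<alpha>) = 0" by simp
  qed
  ultimately show False by simp
qed

end
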